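(* Let $f:\mathbb{R}^2\to\mathbb{R}^2$ be a Topologically Anosov homeomorphism and let $x\in\mathbb{R}^2$ satisfy $\alpha(x)=\emptyset$. Then $\omega(x)\neq\emptyset$.
   Context: A homeomorphism $f:\mathbb{R}^2\to\mathbb{R}^2$ is Topologically Anosov (TA) if: (i) there is a continuous strictly positive $\epsilon:\mathbb{R}^2\to\mathbb{R}$ such that for all $x\neq y$ there is $k\in\mathbb{Z}$ with $\|f^k(x)-f^k(y)\|>\epsilon(f^k(x))$; and (ii) for every continuous strictly positive $\epsilon$ there is a continuous strictly positive $\delta$ such that every $\delta$-pseudo-orbit is $\epsilon$-shadowed by an orbit. A $\delta$-pseudo-orbit is a sequence $(x_n)_{n\in\mathbb{Z}}$ with $\|f(x_n)-x_{n+1}\|<\delta(f(x_n))$; it is $\epsilon$-shadowed by the orbit of $x$ if $\|x_n-f^n(x)\|<\epsilon(x_n)$ for all $n$. $\alpha(x),\omega(x)$ are the $\alpha$- and $\omega$-limit sets. *)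

theory Defs
  imports "HOL-Analysis.Analysis"
begin

type_synonym R2 = "real ^ 2"

definition iter_int :: "(R2 \<Rightarrow> R2) \<Rightarrow> int \<Rightarrow> R2 \<Rightarrow> R2" where
  "iter_int f k = (if 0 \<le> k then f ^^ nat k else inv f ^^ nat (- k))"

definition pos_cont :: "(R2 \<Rightarrow> real) \<Rightarrow> bool" where
  "pos_cont e \<longleftrightarrow> continuous_on UNIV e \<and> (\<forall>x. 0 < e x)"

definition pseudo_orbit :: "(R2 \<Rightarrow> R2) \<Rightarrow> (R2 \<Rightarrow> real) \<Rightarrow> (int \<Rightarrow> R2) \<Rightarrow> bool" where
  "pseudo_orbit f \<delta> xs \<longleftrightarrow> (\<forall>n. norm (f (xs n) - xs (n + 1)) < \<delta> (f (xs n)))"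

definition shadows :: "(R2 \<Rightarrow> R2) \<Rightarrow> (R2 \<Rightarrow> real) \<Rightarrow> (int \<Rightarrow> R2) \<Rightarrow> R2 \<Rightarrow> bool" where
  "shadows f \<epsilon> xs x \<longleftrightarrow> (\<forall>n. norm (xs n - iter_int f n x) < \<epsilon> (xs n))"

definition topologically_anosov :: "(R2 \<Rightarrow> R2) \<Rightarrow> bool" where
  "topologically_anosov f \<longleftrightarrow>
     (\<exists>g. homeomorphism UNIV UNIV f g) \<and>
     (\<exists>\<epsilon>. pos_cont \<epsilon> \<and>
        (\<forall>x y. x \<noteq> y \<longrightarrow> (\<exists>k. norm (iter_int f k x - iter_int f k y) > \<epsilon> (iter_int f k x)))) \<and>
     (\<forall>\<epsilon>. pos_cont \<epsilon> \<longrightarrow> (\<exists>\<delta>. pos_cont \<delta> \<and>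
        (\<forall>xs. pseudo_orbit f \<delta> xs \<longrightarrow> (\<exists>x. shadows f \<epsilon> xs x))))"

definition omega_limit :: "(R2 \<Rightarrow> R2) \<Rightarrow> R2 \<Rightarrow> R2 set" where
  "omega_limit f x = {y. \<exists>r. strict_mono r \<and> ((\<lambda>k. (f ^^ r k) x) \<longlongrightarrow> y) sequentially}"

definition alpha_limit :: "(R2 \<Rightarrow> R2) \<Rightarrow> R2 \<Rightarrow> R2 set" where
  "alpha_limit f x = {y. \<exists>r. strict_mono r \<and> ((\<lambda>k. (inv f ^^ r k) x) \<longlongrightarrow> y) sequentially}"

end

(* If alpha(x) and omega(x) are both empty, the orbit of x visits every bounded set only finitely
   often in both time directions. Hence a positive continuous epsilon can be chosen so small near
   each orbit point that epsilon-shadowing it by an orbit pins that orbit down to within 1/(m+1)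
   after m steps of f or f^-1. Shadow the pseudo-orbit that follows the backward orbit of x and
   then jumps from f(x) to a point y <> f(x) close enough for the shadowing property: the
   shadowing orbit must be the orbit of x, and also pass through y, so y = f(x). *)
theory Submission
  imports Defs
begin

lemma homeomorphism_funpow:
  assumes "homeomorphism S S f g"
  shows "homeomorphism S S (f ^^ n) (g ^^ n)"
proof (induction n)
  case 0
  show ?case using homeomorphism_ident by (simp add: id_def)
next
  case (Suc n)
  have "homeomorphism S S (f \<circ> f ^^ n) (g ^^ n \<circ> g)"
    using homeomorphism_compose[OF Suc assms] .
  then show ?case by (metis funpow.simps(2) funpow_Suc_right)
qed

lemma finite_visits_if_no_convergent_subseq:
  fixes s :: "nat \<Rightarrow> 'a::heine_borel"
  assumes "\<nexists>l r. strict_mono r \<and> ((\<lambda>k. s (r k)) \<longlongrightarrow> l) sequentially"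
    and "bounded S"
  shows "finite {n. s n \<in> S}"
proof (rule ccontr)
  assume "infinite {n. s n \<in> S}"
  then obtain r :: "nat \<Rightarrow> nat" where r: "strict_mono r" "\<And>k. s (r k) \<in> S"
    by (metis infinite_enumerate mem_Collect_eq)
  have "compact (closure S)" using \<open>bounded S\<close> by (rule compact_closure[THEN iffD2])
  then obtain l t where "strict_mono t" "((s \<circ> r) \<circ> t) \<longlonglongrightarrow> l"
    using r(2) closure_subset unfolding compact_eq_seq_compact_metric seq_compact_def
    by (metis comp_apply subsetD)
  moreover have "strict_mono (r \<circ> t)" using r(1) \<open>strict_mono t\<close> by (rule strict_mono_o)
  ultimately have "strict_mono (r \<circ> t) \<and> ((\<lambda>k. s ((r \<circ> t) k)) \<longlongrightarrow> l) sequentially"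
    by (simp add: comp_def)
  with assms(1) show False by blast
qed

lemma locally_finite_pinning_function:
  fixes q :: "'i \<Rightarrow> 'a::metric_space" and \<rho> :: "'i \<Rightarrow> real"
  assumes loc_fin: "\<And>p. finite {i. dist p (q i) < 1}" and \<rho>_pos: "\<And>i. 0 < \<rho> i"
  obtains \<epsilon> where "continuous_on UNIV \<epsilon>" "\<And>w. 0 < \<epsilon> w"
    "\<And>i w. 2 * \<epsilon> w \<le> dist w (q i) + \<rho> i"
proof
  \<comment> \<open>Half the distance to the graph of the radii; local finiteness keeps the graph away from height 0.\<close>
  define T where "T = range (\<lambda>i. (q i, \<rho> i))"
  define \<epsilon> where "\<epsilon> w = infdist (w, 0::real) T / 2" for w
  show "continuous_on UNIV \<epsilon>"
    unfolding \<epsilon>_def by (intro continuous_intros) auto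
  show "0 < \<epsilon> p" for p
  proof -
    define K where "K = {i. dist p (q i) < 1}"
    define r0 where "r0 = Min (insert 1 (\<rho> ` K))"
    have fin: "finite (insert 1 (\<rho> ` K))" using loc_fin by (simp add: K_def)
    have "0 < r0" unfolding r0_def using fin \<rho>_pos by auto
    have "r0 \<le> dist (p, 0) (q i, \<rho> i)" for i
    proof (cases "i \<in> K")
      case True
      then have "r0 \<le> \<rho> i" unfolding r0_def using fin by simp
      also have "\<dots> \<le> dist (p, 0) (q i, \<rho> i)"
        using dist_snd_le[of "(p, 0::real)" "(q i, \<rho> i)"] \<rho>_pos[of i] by simp
      finally show ?thesis .
    next
      case False
      have "r0 \<le> 1" unfolding r0_def using fin by simp
      also have "\<dots> \<le> dist p (q i)" using False by (simp add: K_def)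
      also have "\<dots> \<le> dist (p, 0::real) (q i, \<rho> i)"
        using dist_fst_le[of "(p, 0::real)" "(q i, \<rho> i)"] by simp
      finally show ?thesis .
    qed
    moreover have "T \<noteq> {}" unfolding T_def by blast
    ultimately have "r0 \<le> infdist (p, 0) T"
      unfolding infdist_notempty[OF \<open>T \<noteq> {}\<close>] by (auto simp: T_def intro: cINF_greatest)
    with \<open>0 < r0\<close> show ?thesis unfolding \<epsilon>_def by simp
  qed
  show "2 * \<epsilon> w \<le> dist w (q i) + \<rho> i" for i w
  proof -
    have "infdist (w, 0) T \<le> dist (w, 0::real) (q i, \<rho> i)"
      by (rule infdist_le) (simp add: T_def)
    also have "\<dots> \<le> dist w (q i) + \<bar>\<rho> i\<bar>"
      using sqrt_sum_squares_le_sum_abs[of "dist w (q i)" "dist 0 (\<rho> i)"]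
      by (simp add: dist_Pair_Pair)
    finally show ?thesis using \<rho>_pos[of i] unfolding \<epsilon>_def by simp
  qed
qed

lemma continuity_radii:
  assumes "\<And>i. continuous_on UNIV (h i)" and "\<And>i. 0 < e i"
  obtains \<rho> where "\<And>i. 0 < \<rho> i" "\<And>i w. dist w (a i) < \<rho> i \<Longrightarrow> dist (h i w) (h i (a i)) < e i"
proof -
  have "\<exists>r>0. \<forall>w. dist w (a i) < r \<longrightarrow> dist (h i w) (h i (a i)) < e i" for i
    using assms(1)[of i, unfolded continuous_on_iff] assms(2)[of i] by blast
  then have "\<forall>i. \<exists>r. 0 < r \<and> (\<forall>w. dist w (a i) < r \<longrightarrow> dist (h i w) (h i (a i)) < e i)"
    by blast
  from choice[OF this] obtain \<rho>
    where \<rho>: "\<forall>i. 0 < \<rho> i \<and> (\<forall>w. dist w (a i) < \<rho> i \<longrightarrow> dist (h i w) (h i (a i)) < e i)" ..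
  show ?thesis
  proof (rule that)
    show "0 < \<rho> i" for i using \<rho> by blast
    show "dist (h i w) (h i (a i)) < e i" if "dist w (a i) < \<rho> i" for i w using \<rho> that by blast
  qed
qed

lemma finite_Collect_case_sum:
  assumes "finite {m. P (u m)}" and "finite {m. P (v m)}"
  shows "finite {i. P (case_sum u v i)}"
proof (rule finite_subset)
  show "{i. P (case_sum u v i)} \<subseteq> Inl ` {m. P (u m)} \<union> Inr ` {m. P (v m)}"
  proof
    fix i assume "i \<in> {i. P (case_sum u v i)}"
    then show "i \<in> Inl ` {m. P (u m)} \<union> Inr ` {m. P (v m)}" by (cases i) auto
  qed
  show "finite (Inl ` {m. P (u m)} \<union> Inr ` {m. P (v m)})" using assms by simp
qed

lemma eq_if_dist_less_inverse_Suc: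
  fixes a b :: "'a::metric_space"
  assumes "\<And>m. dist a b < inverse (real (Suc m))"
  shows "a = b"
proof (rule ccontr)
  assume "a \<noteq> b"
  then obtain m where "inverse (real (Suc m)) < dist a b"
    using reals_Archimedean zero_less_dist_iff by blast
  with assms[of m] show False by simp
qed

lemma homeomorphism_UNIV_inv_eq:
  assumes "homeomorphism UNIV UNIV f g"
  shows "inv f = g"
  using assms unfolding homeomorphism_def by (auto intro: inv_equality)

lemma iter_int_homeomorphism:
  assumes "homeomorphism UNIV UNIV f g"
  shows "iter_int f (int m) = f ^^ m" and "iter_int f (- int m) = g ^^ m"
  using homeomorphism_UNIV_inv_eq[OF assms] by (simp_all add: iter_int_def)

definition jump_orbit :: "(R2 \<Rightarrow> R2) \<Rightarrow> (R2 \<Rightarrow> R2) \<Rightarrow> R2 \<Rightarrow> R2 \<Rightarrow> int \<Rightarrow> R2" where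
  "jump_orbit f g x y n = (if n \<le> 0 then (g ^^ nat (- n)) x else (f ^^ nat (n - 1)) y)"

lemma pseudo_orbit_jump_orbit:
  assumes hom: "homeomorphism UNIV UNIV f g" and "pos_cont \<delta>"
    and jump: "norm (f x - y) < \<delta> (f x)"
  shows "pseudo_orbit f \<delta> (jump_orbit f g x y)"
  unfolding pseudo_orbit_def
proof
  fix n :: int
  have fg: "f (g w) = w" for w using hom unfolding homeomorphism_def by simp
  consider "n < 0" | "n = 0" | "0 < n" by linarith
  then have "f (jump_orbit f g x y n) = jump_orbit f g x y (n + 1) \<or> n = 0"
  proof cases
    case 1
    then have "nat (- n) = Suc (nat (- (n + 1)))" by simp
    with 1 show ?thesis by (simp add: jump_orbit_def fg)
  next
    case 3
    then have "nat n = Suc (nat (n - 1))" by simp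
    with 3 show ?thesis by (simp add: jump_orbit_def)
  qed simp
  then show "norm (f (jump_orbit f g x y n) - jump_orbit f g x y (n + 1)) < \<delta> (f (jump_orbit f g x y n))"
    using \<open>pos_cont \<delta>\<close> jump by (auto simp: pos_cont_def jump_orbit_def)
qed

lemma escaping_orbit_pinning:
  assumes hom: "homeomorphism UNIV UNIV f g"
    and bwd: "\<And>p. finite {m. dist p ((g ^^ m) x) < 1}"
    and fwd: "\<And>p. finite {m. dist p ((f ^^ m) x) < 1}"
  obtains \<epsilon> where "pos_cont \<epsilon>"
    "\<And>m z. dist ((g ^^ m) z) ((g ^^ m) x) < \<epsilon> ((g ^^ m) x) \<Longrightarrow> dist z x < inverse (Suc m)"
    "\<And>m w. dist w ((f ^^ Suc m) x) < \<epsilon> w \<Longrightarrow> dist ((g ^^ m) w) (f x) < inverse (Suc m)"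
proof -
  \<comment> \<open>Index Inl m: the point g^m x, carried back to x by f^m; index Inr m: the point f^(m+1) x, carried back to f x by g^m.\<close>
  define a where "a = case_sum (\<lambda>m. (g ^^ m) x) (\<lambda>m. (f ^^ Suc m) x)"
  define h where "h = case_sum (\<lambda>m. f ^^ m) (\<lambda>m. g ^^ m)"
  define e where "e = case_sum (\<lambda>m. inverse (real (Suc m))) (\<lambda>m. inverse (real (Suc m)))"
  have cont: "continuous_on UNIV (h i)" for i
    using homeomorphism_funpow[OF hom] homeomorphism_funpow[OF homeomorphism_symD[OF hom]]
    unfolding h_def homeomorphism_def by (cases i) simp_all
  have e_pos: "0 < e i" for i by (cases i) (simp_all add: e_def)
  obtain \<rho> where \<rho>_pos: "\<And>i. 0 < \<rho> i"
    and \<rho>: "\<And>i w. dist w (a i) < \<rho> i \<Longrightarrow> dist (h i w) (h i (a i)) < e i"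
    using continuity_radii[of h e a, OF cont e_pos] by metis
  have fin: "finite {i. dist p (a i) < 1}" for p
  proof -
    have "finite {m. dist p ((f ^^ Suc m) x) < 1}"
      using finite_vimageI[OF fwd[of p], of Suc] by (simp add: vimage_def)
    then show ?thesis
      unfolding a_def by (rule finite_Collect_case_sum[where P = "\<lambda>y. dist p y < 1", OF bwd])
  qed
  obtain \<epsilon> where \<epsilon>: "continuous_on UNIV \<epsilon>" "\<And>w. 0 < \<epsilon> w"
    "\<And>i w. 2 * \<epsilon> w \<le> dist w (a i) + \<rho> i"
    using locally_finite_pinning_function[of a \<rho>, OF fin \<rho>_pos] by blast
  show ?thesis
  proof
    show "pos_cont \<epsilon>" using \<epsilon>(1,2) by (simp add: pos_cont_def)
  next
    fix m z assume "dist ((g ^^ m) z) ((g ^^ m) x) < \<epsilon> ((g ^^ m) x)"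
    moreover have "2 * \<epsilon> ((g ^^ m) x) \<le> \<rho> (Inl m)"
      using \<epsilon>(3)[of "(g ^^ m) x" "Inl m"] by (simp add: a_def)
    ultimately have "dist ((g ^^ m) z) (a (Inl m)) < \<rho> (Inl m)"
      using \<epsilon>(2)[of "(g ^^ m) x"] by (simp add: a_def)
    then have "dist ((f ^^ m) ((g ^^ m) z)) ((f ^^ m) ((g ^^ m) x)) < inverse (Suc m)"
      using \<rho>[where i = "Inl m"] by (simp add: a_def h_def e_def)
    then show "dist z x < inverse (Suc m)"
      using homeomorphism_funpow[OF hom, of m] by (simp add: homeomorphism_def)
  next
    fix m w assume "dist w ((f ^^ Suc m) x) < \<epsilon> w"
    with \<epsilon>(3)[of w "Inr m"] have "dist w (a (Inr m)) < \<rho> (Inr m)"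
      by (simp add: a_def)
    then have "dist ((g ^^ m) w) ((g ^^ m) ((f ^^ Suc m) x)) < inverse (Suc m)"
      using \<rho>[where i = "Inr m"] by (simp add: a_def h_def e_def)
    moreover have "(g ^^ m) ((f ^^ Suc m) x) = f x"
      using homeomorphism_funpow[OF hom, of m]
      by (simp add: homeomorphism_def funpow_Suc_right del: funpow.simps)
    ultimately show "dist ((g ^^ m) w) (f x) < inverse (Suc m)" by simp
  qed
qed

lemma escaping_orbit_not_shadowable:
  assumes hom: "homeomorphism UNIV UNIV f g"
    and bwd: "\<And>p. finite {m. dist p ((g ^^ m) x) < 1}"
    and fwd: "\<And>p. finite {m. dist p ((f ^^ m) x) < 1}"
    and shadowing: "\<And>\<epsilon>. pos_cont \<epsilon> \<Longrightarrow>
      \<exists>\<delta>. pos_cont \<delta> \<and> (\<forall>xs. pseudo_orbit f \<delta> xs \<longrightarrow> (\<exists>z. shadows f \<epsilon> xs z))"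
  shows False
proof -
  obtain \<epsilon> where "pos_cont \<epsilon>"
    and pin_bwd: "\<And>m z. dist ((g ^^ m) z) ((g ^^ m) x) < \<epsilon> ((g ^^ m) x) \<Longrightarrow> dist z x < inverse (Suc m)"
    and pin_fwd: "\<And>m w. dist w ((f ^^ Suc m) x) < \<epsilon> w \<Longrightarrow> dist ((g ^^ m) w) (f x) < inverse (Suc m)"
    using escaping_orbit_pinning[OF hom bwd fwd] by blast
  obtain \<delta> where "pos_cont \<delta>" and shadow: "\<And>xs. pseudo_orbit f \<delta> xs \<Longrightarrow> \<exists>z. shadows f \<epsilon> xs z"
    using shadowing[OF \<open>pos_cont \<epsilon>\<close>] by blast
  then have "0 < \<delta> (f x)" by (simp add: pos_cont_def)
  define y where "y = f x + (\<delta> (f x) / 2) *\<^sub>R axis 1 1"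
  have "norm (f x - y) < \<delta> (f x)" and "y \<noteq> f x"
    using \<open>0 < \<delta> (f x)\<close> by (simp_all add: y_def)
  then obtain z where z: "\<And>n. norm (jump_orbit f g x y n - iter_int f n z) < \<epsilon> (jump_orbit f g x y n)"
    using shadow pseudo_orbit_jump_orbit[OF hom \<open>pos_cont \<delta>\<close>] unfolding shadows_def by blast
  have "z = x"
  proof (rule eq_if_dist_less_inverse_Suc)
    fix m
    show "dist z x < inverse (Suc m)"
      using z[of "- int m"] iter_int_homeomorphism(2)[OF hom, of m]
      by (intro pin_bwd) (simp add: jump_orbit_def dist_norm norm_minus_commute)
  qed
  have "y = f x"
  proof (rule eq_if_dist_less_inverse_Suc)
    fix m
    have "dist ((f ^^ m) y) ((f ^^ Suc m) x) < \<epsilon> ((f ^^ m) y)"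
      using z[of "int (Suc m)"] iter_int_homeomorphism(1)[OF hom, of "Suc m"] \<open>z = x\<close>
      by (simp add: jump_orbit_def dist_norm)
    then have "dist ((g ^^ m) ((f ^^ m) y)) (f x) < inverse (Suc m)" by (rule pin_fwd)
    then show "dist y (f x) < inverse (Suc m)"
      using homeomorphism_funpow[OF hom, of m] by (simp add: homeomorphism_def)
  qed
  with \<open>y \<noteq> f x\<close> show False ..
qed

theorem mainTheorem10:
  fixes f :: "real ^ 2 \<Rightarrow> real ^ 2" and x :: "real ^ 2"
  assumes "topologically_anosov f"
    and "alpha_limit f x = {}"
  shows "omega_limit f x \<noteq> {}"
proof
  assume "omega_limit f x = {}"
  obtain g where hom: "homeomorphism UNIV UNIV f g"
    using assms(1) unfolding topologically_anosov_def by blast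
  have "finite {m. dist p ((g ^^ m) x) < 1}" for p
    using finite_visits_if_no_convergent_subseq[of "\<lambda>m. (g ^^ m) x" "ball p 1"] assms(2)
    by (simp add: alpha_limit_def homeomorphism_UNIV_inv_eq[OF hom])
  moreover have "finite {m. dist p ((f ^^ m) x) < 1}" for p
    using finite_visits_if_no_convergent_subseq[of "\<lambda>m. (f ^^ m) x" "ball p 1"] \<open>omega_limit f x = {}\<close>
    by (simp add: omega_limit_def)
  ultimately show False
    using escaping_orbit_not_shadowable[OF hom] assms(1) unfolding topologically_anosov_def by blast
qed

end
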